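(* Let $k$ be a positive integer. Let $I_1,\dots,I_n\subset\mathbb{R}$ be segments of lengths $\ell_1,\dots,\ell_n>0$ with midpoints $c_1,\dots,c_n$. Assume that every point of $\mathbb{R}$ belongs to at most $k$ of the interiors of $I_1,\dots,I_n$. Let $c=\frac{\sum_i\ell_ic_i}{\sum_i\ell_i}$, and let $I$ be the segment of length $\frac1k\sum_i\ell_i$ with midpoint $c$. Then $I\subset\operatorname{conv}\bigcup_i I_i$. *)

theory Defs
  imports "HOL-Analysis.Analysis"
begin

end

theory Submission
  imports Defs
begin

text \<open>
  Put \<open>f = \<Sum>\<^sub>i 1\<^bsub>(c\<^sub>i - l\<^sub>i/2, c\<^sub>i + l\<^sub>i/2)\<^esub>\<close>, so \<open>0 \<le> f \<le> k\<close>,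
  \<open>\<integral> f = L = \<Sum> l\<^sub>i\<close> and, for any \<open>b\<close> to the right of all segments,
  \<open>\<integral> f(x)(b - x) dx = \<Sum> l\<^sub>i (b - c\<^sub>i)\<close>. Among densities bounded by \<open>k\<close> with mass \<open>L\<close>
  supported left of \<open>b\<close>, this moment is smallest for \<open>k\<close> times the indicator of
  \<open>(b - L/k, b)\<close>, where it equals \<open>L\<^sup>2/(2k)\<close>. Dividing by \<open>L\<close> shows that the right
  end of \<open>I\<close> lies left of the rightmost endpoint; reflecting gives the left end.
\<close>

lemma has_integral_indicator_Ioo_times:
  fixes g :: "real \<Rightarrow> real"
  assumes "(g has_integral I) {lo..hi}"
  shows "((\<lambda>x. indicator {lo<..<hi} x * g x) has_integral I) UNIV"
proof -
  have "(g has_integral I) {lo<..<hi}"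
    using assms by (simp add: has_integral_Icc_iff_Ioo)
  then have "((\<lambda>x. if x \<in> {lo<..<hi} then g x else 0) has_integral I) UNIV"
    by (simp only: has_integral_restrict_UNIV)
  moreover have "(\<lambda>x. indicator {lo<..<hi} x * g x) = (\<lambda>x. if x \<in> {lo<..<hi} then g x else 0)"
    by (auto simp: indicator_def)
  ultimately show ?thesis
    by simp
qed

lemma has_integral_distance_to_point:
  fixes lo hi b :: real
  assumes "lo \<le> hi"
  shows "((\<lambda>x. b - x) has_integral (hi - lo) * (b - (lo + hi) / 2)) {lo..hi}"
proof -
  have "((\<lambda>x. b - x) has_integral (b * hi - hi\<^sup>2 / 2) - (b * lo - lo\<^sup>2 / 2)) {lo..hi}"
    using assms
    by (intro fundamental_theorem_of_calculus[where f = "\<lambda>x. b * x - x\<^sup>2 / 2"])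
       (auto intro!: derivative_eq_intros
             simp: has_real_derivative_iff_has_vector_derivative[symmetric])
  moreover have "(b * hi - hi\<^sup>2 / 2) - (b * lo - lo\<^sup>2 / 2) = (hi - lo) * (b - (lo + hi) / 2)"
    by (simp add: power2_eq_square field_simps)
  ultimately show ?thesis
    by simp
qed

lemma has_integral_indicator_Ioo:
  fixes lo hi :: real
  assumes "lo \<le> hi"
  shows "(indicator {lo<..<hi} has_integral (hi - lo)) UNIV"
proof -
  have "((\<lambda>_. 1) has_integral (hi - lo)) {lo..hi}"
    using has_integral_const_real[of "1::real" lo hi] assms by simp
  then show ?thesis
    using has_integral_indicator_Ioo_times[of "\<lambda>_. 1" "hi - lo" lo hi] by simp
qed

text \<open>
  The extremal density is \<open>k\<close> times the indicator \<open>g\<close> of \<open>(b - h, b)\<close>, \<open>h = L/k\<close>: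
  the function \<open>(b - x - h) (f x - k g x)\<close> is pointwise nonnegative and
  integrates to \<open>M - L\<^sup>2/(2k)\<close>.
\<close>

lemma first_moment_ge_of_bounded_density:
  fixes f :: "real \<Rightarrow> real" and k L M b :: real
  assumes k: "k > 0"
    and f_nonneg: "\<And>x. 0 \<le> f x" and f_le: "\<And>x. f x \<le> k"
    and f_vanishes: "\<And>x. b \<le> x \<Longrightarrow> f x = 0"
    and mass: "(f has_integral L) UNIV"
    and moment: "((\<lambda>x. f x * (b - x)) has_integral M) UNIV"
  shows "L\<^sup>2 / (2 * k) \<le> M"
proof -
  define h where "h = L / k"
  define g :: "real \<Rightarrow> real" where "g = indicator {b - h<..<b}"
  have "L \<ge> 0"
    using has_integral_nonneg[OF mass] f_nonneg by simp
  then have "h \<ge> 0"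
    using k by (simp add: h_def)
  have g_mass: "(g has_integral h) UNIV"
    using has_integral_indicator_Ioo[of "b - h" b] \<open>h \<ge> 0\<close> by (simp add: g_def)
  have "((\<lambda>x. g x * (b - x)) has_integral (b - (b - h)) * (b - (b - h + b) / 2)) UNIV"
    unfolding g_def
    by (rule has_integral_indicator_Ioo_times[OF has_integral_distance_to_point])
       (use \<open>h \<ge> 0\<close> in simp)
  moreover have "(b - (b - h)) * (b - (b - h + b) / 2) = h\<^sup>2 / 2"
    by (simp add: power2_eq_square field_simps)
  ultimately have g_moment: "((\<lambda>x. g x * (b - x)) has_integral h\<^sup>2 / 2) UNIV"
    by (simp only:)
  have "((\<lambda>x. (b - x - h) * (f x - k * g x)) has_integral
          M - h * L - k * (h\<^sup>2 / 2) + h * k * h) UNIV"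
    using has_integral_add[OF has_integral_diff[OF has_integral_diff[OF moment
          has_integral_mult_right[OF mass, of h]] has_integral_mult_right[OF g_moment, of k]]
        has_integral_mult_right[OF g_mass, of "h * k"]]
    by (simp add: algebra_simps)
  moreover have "0 \<le> (b - x - h) * (f x - k * g x)" for x
  proof (cases "x \<in> {b - h<..<b}")
    case True
    then show ?thesis
      using f_le[of x] by (simp add: g_def mult_nonpos_nonpos)
  next
    case False
    then have "x \<le> b - h \<or> b \<le> x" and "g x = 0"
      by (auto simp: g_def)
    then show ?thesis
      using f_nonneg[of x] f_vanishes[of x] \<open>h \<ge> 0\<close> by auto
  qed
  ultimately have "0 \<le> M - h * L - k * (h\<^sup>2 / 2) + h * k * h"
    by (rule has_integral_nonneg)
  moreover have "M - h * L - k * (h\<^sup>2 / 2) + h * k * h = M - L\<^sup>2 / (2 * k)"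
    using k by (simp add: h_def power2_eq_square field_simps)
  ultimately show ?thesis
    by simp
qed

lemma segments_first_moment_ge:
  fixes k n :: nat and l c :: "nat \<Rightarrow> real" and b :: real
  assumes k: "k > 0" and l_pos: "\<And>i. i < n \<Longrightarrow> l i > 0"
    and right_of: "\<And>i. i < n \<Longrightarrow> c i + l i / 2 \<le> b"
    and depth: "\<And>x::real. card {i. i < n \<and> x \<in> {c i - l i / 2 <..< c i + l i / 2}} \<le> k"
  shows "(\<Sum>i<n. l i)\<^sup>2 / (2 * real k) \<le> (\<Sum>i<n. l i * (b - c i))"
proof -
  define f where "f x = (\<Sum>i<n. indicator {c i - l i / 2 <..< c i + l i / 2} x :: real)" for x
  have seg: "c i - l i / 2 \<le> c i + l i / 2" if "i < n" for i
    using l_pos[OF that] by simp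
  have f_nonneg: "0 \<le> f x" for x
    by (simp add: f_def sum_nonneg)
  have f_le: "f x \<le> real k" for x
  proof -
    have "f x = real (card {i. i < n \<and> x \<in> {c i - l i / 2 <..< c i + l i / 2}})"
      by (simp add: f_def indicator_def sum.If_cases Int_def conj_commute)
    then show ?thesis
      using depth[of x] by simp
  qed
  have f_vanishes: "f x = 0" if "b \<le> x" for x
    using right_of that by (force simp: f_def indicator_def intro!: sum.neutral)
  have mass: "(f has_integral (\<Sum>i<n. l i)) UNIV"
    unfolding f_def
  proof (intro has_integral_sum)
    fix i assume "i \<in> {..<n}"
    then show "(indicator {c i - l i / 2 <..< c i + l i / 2} has_integral l i) UNIV"
      using has_integral_indicator_Ioo[OF seg[of i]] by simp
  qed simp
  have moment: "((\<lambda>x. f x * (b - x)) has_integral (\<Sum>i<n. l i * (b - c i))) UNIV"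
    unfolding f_def sum_distrib_right
  proof (intro has_integral_sum)
    fix i assume "i \<in> {..<n}"
    then have "((\<lambda>x. indicator {c i - l i / 2 <..< c i + l i / 2} x * (b - x)) has_integral
        (c i + l i / 2 - (c i - l i / 2)) * (b - (c i - l i / 2 + (c i + l i / 2)) / 2)) UNIV"
      using has_integral_indicator_Ioo_times[OF has_integral_distance_to_point[OF seg[of i]]]
      by simp
    moreover have "(c i + l i / 2 - (c i - l i / 2)) * (b - (c i - l i / 2 + (c i + l i / 2)) / 2)
        = l i * (b - c i)"
      by (simp add: field_simps)
    ultimately show "((\<lambda>x. indicator {c i - l i / 2 <..< c i + l i / 2} x * (b - x))
        has_integral l i * (b - c i)) UNIV"
      by (simp only:)
  qed simp
  show ?thesis
    using k by (intro first_moment_ge_of_bounded_density[OF _ f_nonneg f_le f_vanishes mass moment])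
       simp
qed

lemma weighted_centre_add_le_right_bound:
  fixes k n :: nat and l c :: "nat \<Rightarrow> real" and b :: real
  assumes "k > 0" and "n \<ge> 1" and l_pos: "\<And>i. i < n \<Longrightarrow> l i > 0"
    and "\<And>i. i < n \<Longrightarrow> c i + l i / 2 \<le> b"
    and "\<And>x::real. card {i. i < n \<and> x \<in> {c i - l i / 2 <..< c i + l i / 2}} \<le> k"
  shows "(\<Sum>i<n. l i * c i) / (\<Sum>i<n. l i) + (\<Sum>i<n. l i) / real k / 2 \<le> b"
proof -
  define L where "L = (\<Sum>i<n. l i)"
  have "L > 0"
    using assms(2) l_pos by (auto simp: L_def lessThan_empty_iff intro!: sum_pos)
  have "L\<^sup>2 / (2 * real k) \<le> b * L - (\<Sum>i<n. l i * c i)"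
    using segments_first_moment_ge[OF assms(1,3-5)]
    by (simp add: L_def algebra_simps sum_subtractf sum_distrib_left)
  then show ?thesis
    using \<open>L > 0\<close> by (simp add: L_def[symmetric] power2_eq_square field_simps)
qed

lemma left_bound_le_weighted_centre_diff:
  fixes k n :: nat and l c :: "nat \<Rightarrow> real" and a :: real
  assumes "k > 0" and "n \<ge> 1" and "\<And>i. i < n \<Longrightarrow> l i > 0"
    and left_of: "\<And>i. i < n \<Longrightarrow> a \<le> c i - l i / 2"
    and depth: "\<And>x::real. card {i. i < n \<and> x \<in> {c i - l i / 2 <..< c i + l i / 2}} \<le> k"
  shows "a \<le> (\<Sum>i<n. l i * c i) / (\<Sum>i<n. l i) - (\<Sum>i<n. l i) / real k / 2"
proof -
  have reflected_depth:
    "card {i. i < n \<and> x \<in> {- c i - l i / 2 <..< - c i + l i / 2}} \<le> k" for x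
  proof -
    have "{i. i < n \<and> x \<in> {- c i - l i / 2 <..< - c i + l i / 2}}
        = {i. i < n \<and> - x \<in> {c i - l i / 2 <..< c i + l i / 2}}"
      by auto
    then show ?thesis
      using depth[of "- x"] by simp
  qed
  have reflected_right_of: "- c i + l i / 2 \<le> - a" if "i < n" for i
    using left_of[OF that] by linarith
  have "(\<Sum>i<n. l i * - c i) / (\<Sum>i<n. l i) + (\<Sum>i<n. l i) / real k / 2 \<le> - a"
    by (rule weighted_centre_add_le_right_bound[where c = "\<lambda>i. - c i"])
       (fact assms reflected_right_of reflected_depth)+
  then show ?thesis
    by (simp add: sum_negf)
qed

theorem lemma8:
  fixes k n :: nat and l c :: "nat \<Rightarrow> real"
  assumes "k > 0" and "n \<ge> 1"
    and "\<And>i. i < n \<Longrightarrow> l i > 0"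
    and "\<And>x::real. card {i. i < n \<and> x \<in> {c i - l i / 2 <..< c i + l i / 2}} \<le> k"
  shows "{(\<Sum>i<n. l i * c i) / (\<Sum>i<n. l i) - (\<Sum>i<n. l i) / real k / 2 ..
          (\<Sum>i<n. l i * c i) / (\<Sum>i<n. l i) + (\<Sum>i<n. l i) / real k / 2}
         \<subseteq> convex hull (\<Union>i<n. {c i - l i / 2 .. c i + l i / 2})"
proof -
  define U where "U = (\<Union>i<n. {c i - l i / 2 .. c i + l i / 2})"
  define a where "a = (MIN i\<in>{..<n}. c i - l i / 2)"
  define b where "b = (MAX i\<in>{..<n}. c i + l i / 2)"
  have "{..<n} \<noteq> {}"
    using assms(2) by (simp add: lessThan_empty_iff)
  obtain ia where ia: "ia \<in> {..<n}" "a = c ia - l ia / 2"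
    unfolding a_def by (rule obtains_MIN[OF finite_lessThan \<open>{..<n} \<noteq> {}\<close>])
  obtain ib where ib: "ib \<in> {..<n}" "b = c ib + l ib / 2"
    unfolding b_def by (rule obtains_MAX[OF finite_lessThan \<open>{..<n} \<noteq> {}\<close>])
  have left: "a \<le> (\<Sum>i<n. l i * c i) / (\<Sum>i<n. l i) - (\<Sum>i<n. l i) / real k / 2"
    by (rule left_bound_le_weighted_centre_diff) (use assms in \<open>auto simp: a_def\<close>)
  have right: "(\<Sum>i<n. l i * c i) / (\<Sum>i<n. l i) + (\<Sum>i<n. l i) / real k / 2 \<le> b"
    by (rule weighted_centre_add_le_right_bound) (use assms in \<open>auto simp: b_def\<close>)
  have "a \<in> U"
    unfolding U_def using ia assms(3)[of ia] by (intro UN_I[of ia]) auto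
  moreover have "b \<in> U"
    unfolding U_def using ib assms(3)[of ib] by (intro UN_I[of ib]) auto
  ultimately have "closed_segment a b \<subseteq> convex hull U"
    by (intro closed_segment_subset_convex_hull hull_inc)
  then show ?thesis
    using left right by (auto simp: U_def closed_segment_eq_real_ivl)
qed

end
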